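(* For every real $\beta\ge 1$ and every integer $n>0$, $\sum_{i=0}^{n}\Big(2^{i}\beta^{2^i}\prod_{j=i}^{n}(1-2^j)\Big)<0.$ *)

theory Defs
  imports Complex_Main
begin

end

theory Submission
  imports Defs
begin

text \<open>
  The term for \<open>i = 0\<close> vanishes (its product contains \<open>1 - 2\<^sup>0\<close>), and peeling off the
  last factor \<open>1 - 2\<^sup>n\<close> shows that the sum for \<open>n = m + 1\<close> equals \<open>-2 (2\<^sup>m\<^sup>+\<^sup>1 - 1) F m (\<beta>\<^sup>2)\<close>,
  where \<open>F = dyadic_poly\<close>.
  Positivity of \<open>F m y\<close> for \<open>y \<ge> 1\<close> goes by induction on \<open>m\<close>: the identity
  \<open>y F' (m+1) y - F (m+1) y = 2 (2\<^sup>m\<^sup>+\<^sup>1 - 1) F m (y\<^sup>2)\<close> and the induction hypothesis make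
  \<open>F (m+1) y / y\<close> strictly increasing on \<open>[1, \<infinity>)\<close>, and its value at \<open>1\<close> is \<open>1\<close>.
\<close>

lemma ratio_ident_strict_increasing:
  fixes f f' :: "real \<Rightarrow> real"
  assumes "0 < a" "a < b"
    and "\<And>x. a \<le> x \<Longrightarrow> x \<le> b \<Longrightarrow> (f has_real_derivative f' x) (at x)"
    and "\<And>x. a \<le> x \<Longrightarrow> x \<le> b \<Longrightarrow> x * f' x - f x > 0"
  shows "f a / a < f b / b"
proof (rule DERIV_pos_imp_increasing[OF \<open>a < b\<close>])
  fix x assume x: "a \<le> x" "x \<le> b"
  then have "((\<lambda>z. f z / z) has_real_derivative (f' x * x - f x * 1) / (x * x)) (at x)"
    using assms(1,3) by (intro DERIV_divide DERIV_ident) auto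
  moreover have "(f' x * x - f x * 1) / (x * x) > 0"
    using assms(4)[OF x] assms(1) x by (simp add: mult.commute)
  ultimately show "\<exists>d. ((\<lambda>z. f z / z) has_real_derivative d) (at x) \<and> d > 0"
    by blast
qed

fun dyadic_poly :: "nat \<Rightarrow> real \<Rightarrow> real" where
  "dyadic_poly 0 y = y"
| "dyadic_poly (Suc n) y = 2^(n+1) * y^(2^(n+1)) - (2^(n+1) - 1) * dyadic_poly n y"

fun dyadic_poly_deriv :: "nat \<Rightarrow> real \<Rightarrow> real" where
  "dyadic_poly_deriv 0 y = 1"
| "dyadic_poly_deriv (Suc n) y =
     2^(n+1) * (2^(n+1) * y^(2^(n+1) - 1)) - (2^(n+1) - 1) * dyadic_poly_deriv n y"

lemma has_real_derivative_dyadic_poly: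
  "(dyadic_poly n has_real_derivative dyadic_poly_deriv n y) (at y)"
  by (induction n) (auto intro!: derivative_eq_intros)

lemma power_two_power_Suc: "(y^2)^(2^n) = (y :: 'a :: monoid_mult)^(2^(Suc n))"
  by (simp add: power_mult[symmetric] power_Suc)

lemma mult_power_pred: "y * y^(n - 1) = (y :: 'a :: monoid_mult)^n" if "0 < n"
  using power_minus_mult[OF that] by (metis power_commutes)

lemma dyadic_poly_deriv_identity:
  "y * dyadic_poly_deriv (Suc n) y - dyadic_poly (Suc n) y = 2 * (2^(n+1) - 1) * dyadic_poly n (y^2)"
proof (induction n)
  case 0
  then show ?case by (simp add: power2_eq_square algebra_simps)
next
  case (Suc n)
  have "y * dyadic_poly_deriv (Suc (Suc n)) y - dyadic_poly (Suc (Suc n)) y =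
      2^(n+2) * (2^(n+2) * (y * y^(2^(n+2) - 1))) - 2^(n+2) * y^(2^(n+2))
      - (2^(n+2) - 1) * (y * dyadic_poly_deriv (Suc n) y - dyadic_poly (Suc n) y)"
    by (simp add: algebra_simps)
  also have "\<dots> = 2 * (2^(n+2) - 1) * (2^(n+1) * (y^2)^(2^(n+1)) - (2^(n+1) - 1) * dyadic_poly n (y^2))"
    unfolding Suc mult_power_pred[OF zero_less_power[OF zero_less_numeral]] power_two_power_Suc
    by (simp add: algebra_simps)
  finally show ?case by simp
qed

lemma dyadic_poly_one: "dyadic_poly n 1 = 1"
  by (induction n) (simp_all add: algebra_simps)

lemma dyadic_poly_pos: "y \<ge> 1 \<Longrightarrow> dyadic_poly n y > 0"
proof (induction n arbitrary: y)
  case 0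
  then show ?case by simp
next
  case (Suc n)
  show ?case
  proof (cases "y = 1")
    case True
    then show ?thesis by (simp only: dyadic_poly_one)
  next
    case False
    with Suc.prems have "1 < y" by simp
    have "dyadic_poly (Suc n) 1 / 1 < dyadic_poly (Suc n) y / y"
    proof (rule ratio_ident_strict_increasing[OF zero_less_one \<open>1 < y\<close> has_real_derivative_dyadic_poly])
      fix x :: real assume "1 \<le> x"
      then have "dyadic_poly n (x^2) > 0" by (intro Suc.IH) (simp add: one_le_power)
      moreover have "(2::real)^(n+1) > 1" using one_less_power[of "2::real" "n+1"] by simp
      ultimately show "x * dyadic_poly_deriv (Suc n) x - dyadic_poly (Suc n) x > 0"
        unfolding dyadic_poly_deriv_identity by simp
    qed
    then show ?thesis using \<open>1 < y\<close> by (simp add: dyadic_poly_one less_divide_eq del: dyadic_poly.simps)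
  qed
qed

definition dyadic_sum :: "nat \<Rightarrow> real \<Rightarrow> real" where
  "dyadic_sum n b = (\<Sum>i=0..n. 2 ^ i * b ^ (2 ^ i) * (\<Prod>j=i..n. (1 - 2 ^ j :: real)))"

lemma dyadic_sum_Suc:
  "dyadic_sum (Suc n) b = (1 - 2^(Suc n)) * (dyadic_sum n b + 2^(Suc n) * b^(2^(Suc n)))"
proof -
  have "dyadic_sum (Suc n) b =
      (\<Sum>i=0..n. 2 ^ i * b ^ (2 ^ i) * (\<Prod>j=i..n. (1 - 2 ^ j)) * (1 - 2^(Suc n)))
      + 2^(Suc n) * b^(2^(Suc n)) * (1 - 2^(Suc n))"
    unfolding dyadic_sum_def by (simp add: sum.atLeast0_atMost_Suc prod.nat_ivl_Suc' mult.assoc)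
  also have "\<dots> = (dyadic_sum n b + 2^(Suc n) * b^(2^(Suc n))) * (1 - 2^(Suc n))"
    unfolding dyadic_sum_def sum_distrib_right distrib_right ..
  finally show ?thesis
    by (simp only: mult.commute)
qed

lemma dyadic_sum_Suc_eq_dyadic_poly:
  "dyadic_sum (Suc m) b = - 2 * (2^(m+1) - 1) * dyadic_poly m (b^2)"
proof (induction m)
  case 0
  show ?case by (simp add: dyadic_sum_Suc) (simp add: dyadic_sum_def power2_eq_square)
next
  case (Suc m)
  show ?case
    unfolding dyadic_sum_Suc[of "Suc m"] Suc dyadic_poly.simps power_two_power_Suc
    by (simp add: algebra_simps)
qed

theorem lemma4:
  fixes \<beta> :: real and n :: nat
  assumes "\<beta> \<ge> 1" and "n > 0"
  shows "(\<Sum>i=0..n. 2 ^ i * \<beta> ^ (2 ^ i) * (\<Prod>j=i..n. (1 - 2 ^ j :: real))) < 0"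
proof -
  obtain m where n: "n = Suc m"
    using \<open>n > 0\<close> gr0_implies_Suc by blast
  have "dyadic_poly m (\<beta>^2) > 0"
    using \<open>\<beta> \<ge> 1\<close> by (intro dyadic_poly_pos) (simp add: one_le_power)
  moreover have "(2::real)^(m+1) > 1"
    using one_less_power[of "2::real" "m+1"] by simp
  ultimately have "(2^(m+1) - 1) * dyadic_poly m (\<beta>^2) > 0"
    by simp
  then have "dyadic_sum n \<beta> < 0"
    unfolding n dyadic_sum_Suc_eq_dyadic_poly by linarith
  then show ?thesis
    by (simp add: dyadic_sum_def)
qed

end
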